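(* Let $\mathcal H$ be a real Hilbert space, $T:\mathcal H\rightrightarrows\mathcal H$ maximal monotone, $a,b\ge0$, $\psi(\rho,z):=a\rho^2+b\rho+\big(\rho\|J_{\rho T}(z)-z\|\big)^2$, $z\in\mathcal H$ with $0\notin T(z)$, $0<\theta_-<\theta_+<\infty$, and let $\rho_-,\rho_+>0$ be such that $\psi(\rho_-,z)=\theta_-$ and $\psi(\rho_+,z)=\theta_+$. Let $\rho>0$. (a) If $\psi(\rho,z)<\theta_-$, then $\rho<\rho_-$ and $\rho_+\le\rho\theta_+/\psi(\rho,z)$. (b) If $\psi(\rho,z)>\theta_+$, then $\rho\theta_-/\psi(\rho,z)\le\rho_-$ and $\rho_+<\rho$.
   Context: $J_{\rho T}:=(\rho T+I)^{-1}$ denotes the resolvent of $\rho T$. *)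

theory Defs
  imports "HOL-Analysis.Analysis"
begin

definition monotone_op :: "('a::real_inner \<Rightarrow> 'a set) \<Rightarrow> bool" where
  "monotone_op T \<longleftrightarrow> (\<forall>x y u v. u \<in> T x \<longrightarrow> v \<in> T y \<longrightarrow> inner (x - y) (u - v) \<ge> 0)"

definition maximal_monotone :: "('a::real_inner \<Rightarrow> 'a set) \<Rightarrow> bool" where
  "maximal_monotone T \<longleftrightarrow> monotone_op T \<and>
     (\<forall>S. monotone_op S \<and> (\<forall>x. T x \<subseteq> S x) \<longrightarrow> S = T)"

text \<open>Resolvent J_{\<rho>T} = (\<rho>T + I)^{-1}: J_{\<rho>T}(z) is the (unique, for maximal monotone T
  and \<rho> > 0) point x with z \<in> \<rho> T(x) + x.\<close>
definition resolvent :: "real \<Rightarrow> ('a::real_inner \<Rightarrow> 'a set) \<Rightarrow> 'a \<Rightarrow> 'a" where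
  "resolvent \<rho> T z = (THE x. \<exists>v \<in> T x. z = \<rho> *\<^sub>R v + x)"

definition psi :: "real \<Rightarrow> real \<Rightarrow> ('a::real_inner \<Rightarrow> 'a set) \<Rightarrow> real \<Rightarrow> 'a \<Rightarrow> real" where
  "psi a b T \<rho> z = a * \<rho>\<^sup>2 + b * \<rho> + (\<rho> * norm (resolvent \<rho> T z - z))\<^sup>2"

end

theory Submission
  imports Defs
begin

(* Both parts follow from two monotonicity properties of r \<mapsto> psi(r, z): psi itself is
   nondecreasing and so is psi(r)/r = a r + b + r |J_rT z - z|^2, because r \<mapsto> |J_rT z - z| is
   nondecreasing (monotonicity of T plus Cauchy-Schwarz). Comparing rho with rho_- and rho_+
   then gives (a) and (b); the hypothesis 0 \<notin> T z only serves to make psi positive.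

   Since the resolvent is a definite description, the real work is Minty's theorem that
   z = rho v + x has a solution with v \<in> T x. Following Minty, the closed balls with diameter
   [y, z - rho v], v \<in> T y, have a common point x, and maximality of T then forces
   (z - x)/rho \<in> T x. Finitely many of these balls meet by a concave maximization on a convex
   hull; for infinitely many, weak compactness is replaced by a Cauchy sequence of points of
   nearly minimal norm in the finite intersections. *)

lemma inner_diff_diff_midpoint:
  fixes x y w :: "'a::real_inner"
  shows "inner (x - y) (x - w) = (norm (x - midpoint y w))\<^sup>2 - (norm (y - w) / 2)\<^sup>2"
  unfolding midpoint_def power2_norm_eq_inner power_divide
  by (simp add: inner_commute algebra_simps) (simp add: field_simps)

lemma convex_comb_inner_le:
  fixes F :: "('a::real_inner \<times> 'a) set"
  assumes anti: "\<And>p q. p \<in> F \<Longrightarrow> q \<in> F \<Longrightarrow> inner (fst p - fst q) (snd p - snd q) \<le> 0"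
    and nonneg: "\<And>p. p \<in> F \<Longrightarrow> 0 \<le> \<mu> p" and sum1: "sum \<mu> F = 1"
  shows "(\<Sum>p\<in>F. \<mu> p * inner (fst p) (snd p))
         \<le> inner (\<Sum>p\<in>F. \<mu> p *\<^sub>R fst p) (\<Sum>p\<in>F. \<mu> p *\<^sub>R snd p)"
    (is "?S \<le> inner ?Y ?W")
proof -
  have diag: "(\<Sum>p\<in>F. \<Sum>q\<in>F. \<mu> p * \<mu> q * inner (fst p) (snd p)) = ?S"
    by (simp add: sum_distrib_left[symmetric] mult.assoc[symmetric] sum1 flip: sum_distrib_right)
  have cross: "(\<Sum>p\<in>F. \<Sum>q\<in>F. \<mu> p * \<mu> q * inner (fst p) (snd q)) = inner ?Y ?W"
    by (simp add: inner_sum_left inner_sum_right sum_distrib_left mult.assoc)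
      (subst sum.swap, simp add: mult.left_commute)
  have "(\<Sum>p\<in>F. \<Sum>q\<in>F. \<mu> p * \<mu> q * inner (fst p - fst q) (snd p - snd q))
      = (\<Sum>p\<in>F. \<Sum>q\<in>F. \<mu> p * \<mu> q * inner (fst p) (snd p))
        + (\<Sum>q\<in>F. \<Sum>p\<in>F. \<mu> q * \<mu> p * inner (fst q) (snd q))
        - (\<Sum>p\<in>F. \<Sum>q\<in>F. \<mu> p * \<mu> q * inner (fst p) (snd q))
        - (\<Sum>q\<in>F. \<Sum>p\<in>F. \<mu> q * \<mu> p * inner (fst q) (snd p))"
    by (subst (2 4) sum.swap)
      (simp add: sum_subtractf sum.distrib algebra_simps)
  also have "\<dots> = 2 * ?S - 2 * inner ?Y ?W"
    unfolding diag cross by simp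
  finally have "2 * ?S - 2 * inner ?Y ?W
      = (\<Sum>p\<in>F. \<Sum>q\<in>F. \<mu> p * \<mu> q * inner (fst p - fst q) (snd p - snd q))" ..
  also have "\<dots> \<le> 0"
    using anti nonneg by (intro sum_nonpos) (simp add: mult_nonneg_nonpos)
  finally show ?thesis by simp
qed

lemma norm_convex_combination_sq:
  fixes a b :: "'a::real_inner"
  shows "(norm ((1 - t) *\<^sub>R a + t *\<^sub>R b))\<^sup>2
       = (1 - t) * (norm a)\<^sup>2 + t * (norm b)\<^sup>2 - t * (1 - t) * (norm (a - b))\<^sup>2"
  unfolding power2_norm_eq_inner
  by (simp add: inner_commute algebra_simps)

lemma le_0_if_le_small_multiples:
  fixes d k :: real
  assumes "\<And>t. 0 < t \<Longrightarrow> t \<le> 1 \<Longrightarrow> d \<le> t * k"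
  shows "d \<le> 0"
proof (rule field_le_epsilon)
  fix e :: real assume "0 < e"
  define t where "t = min 1 (e / (\<bar>k\<bar> + 1))"
  have t: "0 < t" "t \<le> 1" "t * \<bar>k\<bar> \<le> e"
    using \<open>0 < e\<close> by (auto simp: t_def min_def field_simps mult_left_le)
  have "d \<le> t * k" using assms t(1,2) .
  also have "\<dots> \<le> t * \<bar>k\<bar>" using t(1) by (simp add: mult_left_mono)
  finally show "d \<le> 0 + e" using t(3) by simp
qed

lemma maximizer_gap_along_segment:
  fixes g :: "'a::real_vector \<Rightarrow> real"
  assumes "convex C" "u \<in> C" "v \<in> C" and max: "\<And>w. w \<in> C \<Longrightarrow> g w \<le> g u"
    and segment: "\<And>t. g ((1 - t) *\<^sub>R u + t *\<^sub>R v) = (1 - t) * g u + t * g v + t * (1 - t) * k"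
  shows "g v + k \<le> g u"
proof -
  have "g v - g u + k \<le> t * k" if "0 < t" "t \<le> 1" for t
  proof -
    have "(1 - t) *\<^sub>R u + t *\<^sub>R v \<in> C"
      using convexD[OF assms(1-3), of "1 - t" t] that by simp
    then have "t * (g v - g u + (1 - t) * k) \<le> 0"
      using max[of "(1 - t) *\<^sub>R u + t *\<^sub>R v"] segment[of t] by (simp add: algebra_simps)
    then have "g v - g u + (1 - t) * k \<le> 0" using \<open>0 < t\<close> by (simp add: mult_le_0_iff)
    then show ?thesis by (simp add: algebra_simps)
  qed
  then have "g v - g u + k \<le> 0" by (rule le_0_if_le_small_multiples)
  then show ?thesis by simp
qed

(* Lift each pair p = (y, w) to (y, w, <y, w>). On the convex hull of the lifted points,
   g (y, w, c) = c - |midpoint y w|^2 is nonpositive and concave with modulus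
   |mid q - mid q'|^2, so the midpoint part of a maximizer of g satisfies every inequality. *)
lemma finite_antimonotone_pairs_common_point:
  fixes F :: "('a::real_inner \<times> 'a) set"
  assumes "finite F"
    and anti: "\<And>p q. p \<in> F \<Longrightarrow> q \<in> F \<Longrightarrow> inner (fst p - fst q) (snd p - snd q) \<le> 0"
  shows "\<exists>x. \<forall>p\<in>F. inner (x - fst p) (x - snd p) \<le> 0"
proof (cases "F = {}")
  case False
  define lift where "lift p = (fst p, snd p, inner (fst p) (snd p))" for p :: "'a \<times> 'a"
  define mid where "mid q = midpoint (fst q) (fst (snd q))" for q :: "'a \<times> 'a \<times> real"
  define g where "g q = snd (snd q) - (norm (mid q))\<^sup>2" for q
  define C where "C = convex hull (lift ` F)"
  have g_segment: "g ((1 - t) *\<^sub>R q + t *\<^sub>R q')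
      = (1 - t) * g q + t * g q' + t * (1 - t) * (norm (mid q - mid q'))\<^sup>2" for t q q'
  proof -
    have mid_comb: "mid ((1 - t) *\<^sub>R q + t *\<^sub>R q') = (1 - t) *\<^sub>R mid q + t *\<^sub>R mid q'"
      by (simp add: mid_def midpoint_def scaleR_add_right)
    show ?thesis
      unfolding g_def mid_comb norm_convex_combination_sq by (simp add: algebra_simps)
  qed
  have g_lift: "g (lift p) = - (norm (fst p - snd p) / 2)\<^sup>2" for p
    using inner_diff_diff_midpoint[of 0 "fst p" "snd p"] by (simp add: g_def mid_def lift_def)
  have g_nonpos: "g q \<le> 0" if "q \<in> C" for q
  proof -
    have "inj_on lift F" by (auto simp: inj_on_def lift_def prod_eq_iff)
    obtain u where u: "\<forall>s\<in>lift ` F. 0 \<le> u s" "sum u (lift ` F) = 1"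
        "(\<Sum>s\<in>lift ` F. u s *\<^sub>R s) = q"
      using \<open>q \<in> C\<close> \<open>finite F\<close> by (auto simp: C_def convex_hull_finite)
    define \<mu> where "\<mu> = u \<circ> lift"
    have \<mu>: "\<And>p. p \<in> F \<Longrightarrow> 0 \<le> \<mu> p" "sum \<mu> F = 1" "q = (\<Sum>p\<in>F. \<mu> p *\<^sub>R lift p)"
      using u by (auto simp: \<mu>_def sum.reindex[OF \<open>inj_on lift F\<close>])
    define Y where "Y = (\<Sum>p\<in>F. \<mu> p *\<^sub>R fst p)"
    define W where "W = (\<Sum>p\<in>F. \<mu> p *\<^sub>R snd p)"
    have "g q = (\<Sum>p\<in>F. \<mu> p * inner (fst p) (snd p)) - (norm (midpoint Y W))\<^sup>2"
      by (simp add: g_def mid_def \<mu>(3) Y_def W_def fst_sum snd_sum lift_def)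
    also have "\<dots> \<le> inner Y W - (norm (midpoint Y W))\<^sup>2"
      using convex_comb_inner_le[OF anti \<mu>(1,2)] by (simp add: Y_def W_def)
    also have "\<dots> \<le> 0"
      using inner_diff_diff_midpoint[of 0 Y W] by simp
    finally show ?thesis .
  qed
  have "compact C" "C \<noteq> {}"
    using \<open>finite F\<close> False by (simp_all add: C_def finite_imp_compact_convex_hull)
  moreover have "continuous_on C g"
    unfolding g_def mid_def midpoint_def by (intro continuous_intros)
  ultimately obtain qs where qs: "qs \<in> C" "\<And>q. q \<in> C \<Longrightarrow> g q \<le> g qs"
    using continuous_attains_sup by metis
  show ?thesis
  proof (intro exI ballI)
    fix p assume "p \<in> F"
    then have "lift p \<in> C" by (simp add: C_def hull_inc)
    then have "g (lift p) + (norm (mid qs - mid (lift p)))\<^sup>2 \<le> g qs"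
      using maximizer_gap_along_segment[OF _ qs(1) _ qs(2) g_segment] by (simp add: C_def)
    moreover have "inner (mid qs - fst p) (mid qs - snd p)
        = g (lift p) + (norm (mid qs - mid (lift p)))\<^sup>2"
      unfolding g_lift using inner_diff_diff_midpoint[of "mid qs" "fst p" "snd p"]
      by (simp add: mid_def lift_def)
    ultimately show "inner (mid qs - fst p) (mid qs - snd p) \<le> 0"
      using g_nonpos[OF qs(1)] by simp
  qed
qed simp

lemma convex_near_minimizers_close:
  fixes C :: "'a::real_inner set"
  assumes "convex C" "x \<in> C" "y \<in> C" and lower: "\<And>v. v \<in> C \<Longrightarrow> m \<le> (norm v)\<^sup>2"
    and "(norm x)\<^sup>2 \<le> m + d" "(norm y)\<^sup>2 \<le> m + d"
  shows "(norm (x - y))\<^sup>2 \<le> 4 * d"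
proof -
  have "(1 - 1/2) *\<^sub>R x + (1/2) *\<^sub>R y \<in> C"
    using convexD[OF assms(1-3), of "1 - 1/2" "1/2"] by simp
  then have "m \<le> (norm ((1 - 1/2) *\<^sub>R x + (1/2) *\<^sub>R y))\<^sup>2" by (rule lower)
  then show ?thesis
    unfolding norm_convex_combination_sq using assms(5,6) by simp
qed

lemma Cauchy_if_dist_le_null:
  fixes x :: "nat \<Rightarrow> 'a::metric_space"
  assumes dist: "\<And>n m. n \<le> m \<Longrightarrow> dist (x n) (x m) \<le> d n" and "d \<longlonglongrightarrow> 0"
  shows "Cauchy x"
proof (rule metric_CauchyI)
  fix e :: real assume "0 < e"
  then have "eventually (\<lambda>n. d n < e / 2) sequentially"
    by (intro order_tendstoD(2)[OF \<open>d \<longlonglongrightarrow> 0\<close>]) simp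
  then obtain N where "d N < e / 2" by (auto simp: eventually_sequentially)
  then have "dist (x N) (x n) < e / 2" if "N \<le> n" for n
    using dist[OF that] by simp
  then show "\<exists>M. \<forall>m\<ge>M. \<forall>n\<ge>M. dist (x m) (x n) < e"
    by (meson dist_triangle_half_r)
qed

(* e is the supremum, over the finite subfamilies, of the squared distance from 0 to their
   intersection. *)
lemma fip_sup_min_norm:
  fixes \<A> :: "'a::real_normed_vector set set"
  assumes "A\<^sub>0 \<in> \<A>" "bounded A\<^sub>0"
    and fip: "\<And>\<F>. finite \<F> \<Longrightarrow> \<F> \<subseteq> \<A> \<Longrightarrow> \<Inter>\<F> \<noteq> {}"
  obtains e where
    "\<And>\<F> d. finite \<F> \<Longrightarrow> \<F> \<subseteq> \<A> \<Longrightarrow> 0 < d \<Longrightarrow> \<exists>x\<in>\<Inter>\<F>. (norm x)\<^sup>2 < e + d"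
    "\<And>d. 0 < d \<Longrightarrow> \<exists>\<F>. finite \<F> \<and> \<F> \<subseteq> \<A> \<and> (\<forall>x\<in>\<Inter>\<F>. e - d \<le> (norm x)\<^sup>2)"
proof
  define lbs where "lbs = {m. \<exists>\<F>. finite \<F> \<and> \<F> \<subseteq> \<A> \<and> (\<forall>x\<in>\<Inter>\<F>. m \<le> (norm x)\<^sup>2)}"
  obtain R where R: "\<And>x. x \<in> A\<^sub>0 \<Longrightarrow> norm x \<le> R"
    using \<open>bounded A\<^sub>0\<close> by (auto simp: bounded_iff)
  have "m \<le> R\<^sup>2" if "m \<in> lbs" for m
  proof -
    obtain \<F> where \<F>: "finite \<F>" "\<F> \<subseteq> \<A>" "\<forall>x\<in>\<Inter>\<F>. m \<le> (norm x)\<^sup>2"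
      using \<open>m \<in> lbs\<close> by (auto simp: lbs_def)
    then obtain x where "x \<in> \<Inter>(insert A\<^sub>0 \<F>)"
      using fip[of "insert A\<^sub>0 \<F>"] \<open>A\<^sub>0 \<in> \<A>\<close> by auto
    then have "m \<le> (norm x)\<^sup>2" "norm x \<le> R" using \<F>(3) R by auto
    then show ?thesis by (meson norm_ge_zero order_trans power_mono)
  qed
  moreover have "0 \<in> lbs" by (auto simp: lbs_def)
  ultimately have lbs: "bdd_above lbs" "lbs \<noteq> {}" by (auto intro: bdd_aboveI[of _ "R\<^sup>2"])
  show "\<exists>x\<in>\<Inter>\<F>. (norm x)\<^sup>2 < Sup lbs + d" if "finite \<F>" "\<F> \<subseteq> \<A>" "0 < d" for \<F> d
  proof (rule ccontr)
    assume "\<not> ?thesis"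
    then have "Sup lbs + d \<in> lbs" using that by (force simp: lbs_def not_less)
    then show False using cSup_upper[OF _ lbs(1)] \<open>0 < d\<close> by fastforce
  qed
  show "\<exists>\<F>. finite \<F> \<and> \<F> \<subseteq> \<A> \<and> (\<forall>x\<in>\<Inter>\<F>. Sup lbs - d \<le> (norm x)\<^sup>2)" if "0 < d" for d
  proof -
    obtain m where "m \<in> lbs" "Sup lbs - d < m"
      using less_cSup_iff[OF lbs(2,1), of "Sup lbs - d"] \<open>0 < d\<close> by auto
    then show ?thesis by (force simp: lbs_def)
  qed
qed

lemma fip_min_norm_chain:
  fixes \<A> :: "'a::real_normed_vector set set" and \<epsilon> :: "nat \<Rightarrow> real"
  assumes "A\<^sub>0 \<in> \<A>" "bounded A\<^sub>0"
    and fip: "\<And>\<F>. finite \<F> \<Longrightarrow> \<F> \<subseteq> \<A> \<Longrightarrow> \<Inter>\<F> \<noteq> {}"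
    and \<epsilon>_pos: "\<And>n. 0 < \<epsilon> n"
  obtains e H where
    "\<And>\<F> d. finite \<F> \<Longrightarrow> \<F> \<subseteq> \<A> \<Longrightarrow> 0 < d \<Longrightarrow> \<exists>x\<in>\<Inter>\<F>. (norm x)\<^sup>2 < e + d"
    "\<And>n. finite (H n)" "\<And>n. H n \<subseteq> \<A>" "mono H"
    "\<And>n x. x \<in> \<Inter>(H n) \<Longrightarrow> e - \<epsilon> n \<le> (norm x)\<^sup>2"
proof -
  obtain e where near_min:
      "\<And>\<F> d. finite \<F> \<Longrightarrow> \<F> \<subseteq> \<A> \<Longrightarrow> 0 < d \<Longrightarrow> \<exists>x\<in>\<Inter>\<F>. (norm x)\<^sup>2 < e + d"
    and lower: "\<And>d. 0 < d \<Longrightarrow> \<exists>\<F>. finite \<F> \<and> \<F> \<subseteq> \<A> \<and> (\<forall>x\<in>\<Inter>\<F>. e - d \<le> (norm x)\<^sup>2)"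
    using assms(1-3) by (rule fip_sup_min_norm) (assumption | rule that)+
  have "\<forall>n. \<exists>\<F>. finite \<F> \<and> \<F> \<subseteq> \<A> \<and> (\<forall>x\<in>\<Inter>\<F>. e - \<epsilon> n \<le> (norm x)\<^sup>2)"
    using lower[OF \<epsilon>_pos] by blast
  then obtain \<F> where \<F>: "\<And>n. finite (\<F> n) \<and> \<F> n \<subseteq> \<A>"
      "\<And>n x. x \<in> \<Inter>(\<F> n) \<Longrightarrow> e - \<epsilon> n \<le> (norm x)\<^sup>2"
    by metis
  define H where "H n = (\<Union>k\<le>n. \<F> k)" for n
  show thesis
  proof (rule that[OF near_min])
    show "finite (H n)" "H n \<subseteq> \<A>" for n using \<F>(1) by (auto simp: H_def)
    show "mono H" unfolding H_def by (intro monoI UN_mono) auto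
    fix n x assume "x \<in> \<Inter>(H n)"
    moreover have "\<F> n \<subseteq> H n" by (auto simp: H_def)
    ultimately show "e - \<epsilon> n \<le> (norm x)\<^sup>2" using \<F>(2) by blast
  qed
qed

lemma closed_convex_fip_Inter_nonempty:
  fixes \<A> :: "'a::{real_inner,complete_space} set set"
  assumes closed: "\<And>A. A \<in> \<A> \<Longrightarrow> closed A" and convex: "\<And>A. A \<in> \<A> \<Longrightarrow> convex A"
    and "A\<^sub>0 \<in> \<A>" "bounded A\<^sub>0"
    and fip: "\<And>\<F>. finite \<F> \<Longrightarrow> \<F> \<subseteq> \<A> \<Longrightarrow> \<Inter>\<F> \<noteq> {}"
  shows "\<Inter>\<A> \<noteq> {}"
proof -
  define \<epsilon> where "\<epsilon> = (\<lambda>n. inverse (real (Suc n)))"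
  have \<epsilon>_pos: "0 < \<epsilon> n" for n by (simp add: \<epsilon>_def)
  have \<epsilon>_mono: "\<epsilon> m \<le> \<epsilon> n" if "n \<le> m" for n m
    using that by (simp add: \<epsilon>_def le_imp_inverse_le)
  obtain e H where near_min:
      "\<And>\<F> d. finite \<F> \<Longrightarrow> \<F> \<subseteq> \<A> \<Longrightarrow> 0 < d \<Longrightarrow> \<exists>x\<in>\<Inter>\<F>. (norm x)\<^sup>2 < e + d"
    and H: "\<And>n. finite (H n)" "\<And>n. H n \<subseteq> \<A>" "mono H"
      "\<And>n x. x \<in> \<Inter>(H n) \<Longrightarrow> e - \<epsilon> n \<le> (norm x)\<^sup>2"
    using assms(3-5) \<epsilon>_pos by (rule fip_min_norm_chain[of _ _ \<epsilon>]) (assumption | rule that)+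
  define \<delta> where "\<delta> = (\<lambda>n. sqrt (8 * \<epsilon> n))"
  have \<delta>: "\<delta> \<longlonglongrightarrow> 0"
    using tendsto_real_sqrt[OF tendsto_mult_right_zero[OF LIMSEQ_inverse_real_of_nat, of 8]]
    by (simp add: \<delta>_def \<epsilon>_def)
  have close: "dist x y \<le> \<delta> n"
    if "x \<in> \<Inter>(H n)" "y \<in> \<Inter>(H n)" "(norm x)\<^sup>2 < e + \<epsilon> n" "(norm y)\<^sup>2 < e + \<epsilon> n" for n x y
  proof -
    have "convex (\<Inter>(H n))" using H(2) convex by (auto intro: convex_Inter)
    then have "(norm (x - y))\<^sup>2 \<le> 4 * (2 * \<epsilon> n)"
      using convex_near_minimizers_close[OF _ that(1,2) H(4), of n "2 * \<epsilon> n"] that(3,4) by simp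
    then show ?thesis by (simp add: \<delta>_def dist_norm real_le_rsqrt)
  qed
  have "\<forall>n. \<exists>x\<in>\<Inter>(H n). (norm x)\<^sup>2 < e + \<epsilon> n" using near_min[OF H(1,2) \<epsilon>_pos] by blast
  then obtain x where x: "\<And>n. x n \<in> \<Inter>(H n)" "\<And>n. (norm (x n))\<^sup>2 < e + \<epsilon> n" by metis
  have "Cauchy x"
  proof (rule Cauchy_if_dist_le_null[OF _ \<delta>])
    fix n m :: nat assume "n \<le> m"
    have "x m \<in> \<Inter>(H n)" using x(1)[of m] monoD[OF H(3) \<open>n \<le> m\<close>] by blast
    moreover have "(norm (x m))\<^sup>2 < e + \<epsilon> n" using x(2)[of m] \<epsilon>_mono[OF \<open>n \<le> m\<close>] by simp
    ultimately show "dist (x n) (x m) \<le> \<delta> n" using close[OF x(1) _ x(2)] by blast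
  qed
  then obtain L where L: "x \<longlonglongrightarrow> L" using Cauchy_convergent_iff convergent_def by blast
  have "L \<in> A" if "A \<in> \<A>" for A
  proof -
    have "\<forall>n. \<exists>y\<in>\<Inter>(insert A (H n)). (norm y)\<^sup>2 < e + \<epsilon> n"
      using near_min[of "insert A (H _)", OF _ _ \<epsilon>_pos] H(1,2) \<open>A \<in> \<A>\<close> by simp
    then obtain y where y: "\<And>n. y n \<in> \<Inter>(insert A (H n))" "\<And>n. (norm (y n))\<^sup>2 < e + \<epsilon> n"
      by metis
    have "norm (y n - x n) \<le> \<delta> n" for n
      using close[OF _ x(1) _ x(2)] y by (auto simp: dist_norm)
    then have "(\<lambda>n. y n - x n) \<longlonglongrightarrow> 0"
      by (intro Lim_null_comparison[OF _ \<delta>] always_eventually) blast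
    then have "y \<longlonglongrightarrow> L" using Lim_transform[OF L] by blast
    then show ?thesis using closed[OF \<open>A \<in> \<A>\<close>] y(1) by (auto intro: closed_sequentially)
  qed
  then show ?thesis by auto
qed

lemma antimonotone_pairs_common_point:
  fixes G :: "('a::{real_inner,complete_space} \<times> 'a) set"
  assumes anti: "\<And>p q. p \<in> G \<Longrightarrow> q \<in> G \<Longrightarrow> inner (fst p - fst q) (snd p - snd q) \<le> 0"
  shows "\<exists>x. \<forall>p\<in>G. inner (x - fst p) (x - snd p) \<le> 0"
proof (cases "G = {}")
  case False
  define B where "B p = {x. inner (x - fst p) (x - snd p) \<le> 0}" for p :: "'a \<times> 'a"
  have B_cball: "B p = cball (midpoint (fst p) (snd p)) (norm (fst p - snd p) / 2)" for p
    by (auto simp: B_def inner_diff_diff_midpoint dist_norm norm_minus_commute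
        power_mono_iff abs_le_square_iff)
  obtain p\<^sub>0 where "p\<^sub>0 \<in> G" using False by blast
  have "\<Inter>\<F> \<noteq> {}" if \<F>: "finite \<F>" "\<F> \<subseteq> B ` G" for \<F>
  proof -
    obtain F where "F \<subseteq> G" "finite F" "\<F> = B ` F"
      using finite_subset_image[OF \<F>] by blast
    moreover obtain x where "\<forall>p\<in>F. inner (x - fst p) (x - snd p) \<le> 0"
      using finite_antimonotone_pairs_common_point[of F] anti \<open>F \<subseteq> G\<close> \<open>finite F\<close> by blast
    ultimately show ?thesis by (auto simp: B_def)
  qed
  then have "\<Inter>(B ` G) \<noteq> {}"
    using closed_convex_fip_Inter_nonempty[of "B ` G" "B p\<^sub>0"] \<open>p\<^sub>0 \<in> G\<close> by (auto simp: B_cball)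
  then show ?thesis by (auto simp: B_def)
qed simp

lemma monotone_opD: "monotone_op T \<Longrightarrow> u \<in> T x \<Longrightarrow> v \<in> T y \<Longrightarrow> 0 \<le> inner (x - y) (u - v)"
  by (simp add: monotone_op_def)

lemma maximal_monotone_memI:
  assumes max: "maximal_monotone T" and related: "\<And>y v. v \<in> T y \<Longrightarrow> 0 \<le> inner (x - y) (u - v)"
  shows "u \<in> T x"
proof -
  define S where "S = T(x := insert u (T x))"
  have related': "0 \<le> inner (y - x) (v - u)" if "v \<in> T y" for y v
    using related[OF that] by (metis inner_minus_left inner_minus_right minus_diff_eq)
  have "monotone_op T" using max by (simp add: maximal_monotone_def)
  then have "monotone_op S"
    unfolding monotone_op_def S_def using related related' by auto
  moreover have "\<forall>y. T y \<subseteq> S y" by (simp add: S_def subset_insertI)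
  ultimately have "S = T" using max by (simp add: maximal_monotone_def)
  then show ?thesis by (metis S_def fun_upd_same insertI1)
qed

lemma resolvent_eqI:
  assumes "monotone_op T" "0 < \<rho>" "v \<in> T x" "z = \<rho> *\<^sub>R v + x"
  shows "resolvent \<rho> T z = x"
  unfolding resolvent_def
proof (rule the_equality)
  show "\<exists>v\<in>T x. z = \<rho> *\<^sub>R v + x" using assms(3,4) by blast
  fix x' assume "\<exists>v'\<in>T x'. z = \<rho> *\<^sub>R v' + x'"
  then obtain v' where v': "v' \<in> T x'" "z = \<rho> *\<^sub>R v' + x'" by blast
  then have x': "x' - x = \<rho> *\<^sub>R (v - v')" using assms(4) by (simp add: algebra_simps)
  have "0 \<le> inner (x' - x) (v' - v)" using monotone_opD[OF assms(1) v'(1) assms(3)] .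
  also have "\<dots> = - (\<rho> * (norm (v - v'))\<^sup>2)"
    unfolding x' power2_norm_eq_inner by (metis inner_minus_right inner_scaleR_left minus_diff_eq)
  finally have "\<rho> * (norm (v - v'))\<^sup>2 \<le> 0" by simp
  then have "v = v'" using \<open>0 < \<rho>\<close> by (simp add: mult_le_0_iff)
  then show "x' = x" using x' by simp
qed

lemma resolvent_exists:
  fixes T :: "'a::{real_inner,complete_space} \<Rightarrow> 'a set"
  assumes max: "maximal_monotone T" and "0 < \<rho>"
  shows "\<exists>x. \<exists>v\<in>T x. z = \<rho> *\<^sub>R v + x"
proof -
  have mono: "monotone_op T" using max by (simp add: maximal_monotone_def)
  define G where "G = {(y, z - \<rho> *\<^sub>R v) | y v. v \<in> T y}"
  have "inner (fst p - fst q) (snd p - snd q) \<le> 0" if pq: "p \<in> G" "q \<in> G" for p q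
  proof -
    obtain y v y' v' where "p = (y, z - \<rho> *\<^sub>R v)" "v \<in> T y" "q = (y', z - \<rho> *\<^sub>R v')" "v' \<in> T y'"
      using pq by (auto simp: G_def)
    then show ?thesis
      using monotone_opD[OF mono \<open>v \<in> T y\<close> \<open>v' \<in> T y'\<close>] \<open>0 < \<rho>\<close>
      by (simp add: inner_diff_right scaleR_diff_right[symmetric] mult_le_0_iff)
  qed
  then obtain x where x: "\<forall>p\<in>G. inner (x - fst p) (x - snd p) \<le> 0"
    using antimonotone_pairs_common_point by blast
  define u where "u = (1 / \<rho>) *\<^sub>R (z - x)"
  have "0 \<le> inner (x - y) (u - v)" if "v \<in> T y" for y v
  proof -
    have "inner (x - y) (x - (z - \<rho> *\<^sub>R v)) \<le> 0" using x that by (auto simp: G_def)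
    moreover have "x - (z - \<rho> *\<^sub>R v) = - \<rho> *\<^sub>R (u - v)"
      using \<open>0 < \<rho>\<close> by (simp add: u_def algebra_simps)
    ultimately show ?thesis using \<open>0 < \<rho>\<close> by (simp add: zero_le_mult_iff)
  qed
  then have "u \<in> T x" by (rule maximal_monotone_memI[OF max])
  moreover have "z = \<rho> *\<^sub>R u + x" using \<open>0 < \<rho>\<close> by (simp add: u_def)
  ultimately show ?thesis by blast
qed

lemma resolvent_in_graph:
  fixes T :: "'a::{real_inner,complete_space} \<Rightarrow> 'a set"
  assumes "maximal_monotone T" "0 < \<rho>"
  shows "\<exists>v\<in>T (resolvent \<rho> T z). z = \<rho> *\<^sub>R v + resolvent \<rho> T z"
proof -
  obtain x v where "v \<in> T x" "z = \<rho> *\<^sub>R v + x" using resolvent_exists[OF assms] by blast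
  moreover from this have "resolvent \<rho> T z = x"
    using assms by (intro resolvent_eqI) (auto simp: maximal_monotone_def)
  ultimately show ?thesis by auto
qed

lemma norm_resolvent_diff_mono:
  fixes T :: "'a::{real_inner,complete_space} \<Rightarrow> 'a set"
  assumes max: "maximal_monotone T" and "0 < r" "r \<le> s"
  shows "norm (resolvent r T z - z) \<le> norm (resolvent s T z - z)"
proof -
  have "0 < s" using assms by simp
  obtain v where v: "v \<in> T (resolvent r T z)" "z = r *\<^sub>R v + resolvent r T z"
    using resolvent_in_graph[OF max \<open>0 < r\<close>] by blast
  obtain w where w: "w \<in> T (resolvent s T z)" "z = s *\<^sub>R w + resolvent s T z"
    using resolvent_in_graph[OF max \<open>0 < s\<close>] by blast
  define a b where "a = norm v" and "b = norm w"
  have "0 \<le> inner (resolvent r T z - resolvent s T z) (v - w)"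
    using max v(1) w(1) by (intro monotone_opD) (auto simp: maximal_monotone_def)
  also have "resolvent r T z - resolvent s T z = s *\<^sub>R w - r *\<^sub>R v"
    using v(2) w(2) by (simp add: algebra_simps)
  also have "inner (s *\<^sub>R w - r *\<^sub>R v) (v - w) = (r + s) * inner v w - r * a\<^sup>2 - s * b\<^sup>2"
    by (simp add: a_def b_def power2_norm_eq_inner inner_commute algebra_simps)
  also have "\<dots> \<le> (r + s) * (a * b) - r * a\<^sup>2 - s * b\<^sup>2"
    using norm_cauchy_schwarz[of v w] assms by (simp add: a_def b_def mult_left_mono)
  also have "\<dots> = - ((r * a - s * b) * (a - b))"
    by (simp add: power2_eq_square algebra_simps)
  finally have product: "(r * a - s * b) * (a - b) \<le> 0" by simp
  have "r * a \<le> s * b"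
  proof (rule ccontr)
    assume "\<not> r * a \<le> s * b"
    then have "a \<le> b" using product by (simp add: mult_le_0_iff)
    then have "r * a \<le> s * b"
      using assms by (intro mult_mono) (auto simp: a_def b_def)
    then show False using \<open>\<not> r * a \<le> s * b\<close> by simp
  qed
  moreover have "resolvent r T z - z = - (r *\<^sub>R v)" "resolvent s T z - z = - (s *\<^sub>R w)"
    using v(2) w(2) by (simp_all add: algebra_simps)
  ultimately show ?thesis
    using assms \<open>0 < s\<close> by (simp add: a_def b_def)
qed

lemma resolvent_neq_if_zero_notin:
  fixes T :: "'a::{real_inner,complete_space} \<Rightarrow> 'a set"
  assumes "maximal_monotone T" "0 < \<rho>" "0 \<notin> T z"
  shows "resolvent \<rho> T z \<noteq> z"
proof
  assume "resolvent \<rho> T z = z"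
  moreover obtain v where "v \<in> T (resolvent \<rho> T z)" "z = \<rho> *\<^sub>R v + resolvent \<rho> T z"
    using resolvent_in_graph[OF assms(1,2)] by blast
  ultimately show False using assms(2,3) by auto
qed

lemma psi_nonneg: "0 \<le> a \<Longrightarrow> 0 \<le> b \<Longrightarrow> 0 \<le> \<rho> \<Longrightarrow> 0 \<le> psi a b T \<rho> z"
  by (simp add: psi_def)

lemma psi_pos:
  fixes T :: "'a::{real_inner,complete_space} \<Rightarrow> 'a set"
  assumes "maximal_monotone T" "0 \<le> a" "0 \<le> b" "0 \<notin> T z" "0 < \<rho>"
  shows "0 < psi a b T \<rho> z"
proof -
  have "0 < (\<rho> * norm (resolvent \<rho> T z - z))\<^sup>2"
    using resolvent_neq_if_zero_notin[OF assms(1,5,4)] \<open>0 < \<rho>\<close> by simp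
  then show ?thesis using assms(2,3,5) by (simp add: psi_def add_nonneg_pos)
qed

lemma psi_div_mono:
  fixes T :: "'a::{real_inner,complete_space} \<Rightarrow> 'a set"
  assumes "maximal_monotone T" "0 \<le> a" "0 < r" "r \<le> s"
  shows "psi a b T r z / r \<le> psi a b T s z / s"
proof -
  have psi_div: "psi a b T \<rho> z / \<rho> = a * \<rho> + b + \<rho> * (norm (resolvent \<rho> T z - z))\<^sup>2"
    if "0 < \<rho>" for \<rho>
    using that by (simp add: psi_def power2_eq_square field_simps)
  have "norm (resolvent r T z - z) \<le> norm (resolvent s T z - z)"
    using norm_resolvent_diff_mono[OF assms(1,3,4)] .
  then have "r * (norm (resolvent r T z - z))\<^sup>2 \<le> s * (norm (resolvent s T z - z))\<^sup>2"
    using assms(3,4) by (intro mult_mono power_mono) auto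
  moreover have "a * r \<le> a * s" using assms(4,2) by (rule mult_left_mono)
  ultimately show ?thesis using assms(3,4) by (simp add: psi_div)
qed

lemma psi_mono:
  fixes T :: "'a::{real_inner,complete_space} \<Rightarrow> 'a set"
  assumes "maximal_monotone T" "0 \<le> a" "0 \<le> b" "0 < r" "r \<le> s"
  shows "psi a b T r z \<le> psi a b T s z"
proof -
  have "psi a b T r z = r * (psi a b T r z / r)" using assms(4) by simp
  also have "\<dots> \<le> s * (psi a b T s z / s)"
    using psi_div_mono[OF assms(1,2,4,5)] psi_nonneg[OF assms(2,3), of r T z] assms(4,5)
    by (intro mult_mono) simp_all
  also have "\<dots> = psi a b T s z" using assms(4,5) by simp
  finally show ?thesis .
qed

theorem lemma5p7:
  fixes T :: "'a::{real_inner, complete_space} \<Rightarrow> 'a set"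
    and a b \<theta>m \<theta>p \<rho>m \<rho>p \<rho> :: real and z :: 'a
  assumes "maximal_monotone T"
    and "a \<ge> 0" and "b \<ge> 0"
    and "0 \<notin> T z"
    and "0 < \<theta>m" and "\<theta>m < \<theta>p"
    and "\<rho>m > 0" and "\<rho>p > 0"
    and "psi a b T \<rho>m z = \<theta>m" and "psi a b T \<rho>p z = \<theta>p"
    and "\<rho> > 0"
  shows "(psi a b T \<rho> z < \<theta>m \<longrightarrow> \<rho> < \<rho>m \<and> \<rho>p \<le> \<rho> * \<theta>p / psi a b T \<rho> z)
       \<and> (psi a b T \<rho> z > \<theta>p \<longrightarrow> \<rho> * \<theta>m / psi a b T \<rho> z \<le> \<rho>m \<and> \<rho>p < \<rho>)"
proof -
  note psi_le = psi_mono[OF assms(1-3)] and psi_div_le = psi_div_mono[OF assms(1,2)]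
  have pos: "0 < psi a b T \<rho> z" using psi_pos[OF assms(1-4,11)] .
  have "\<rho> < \<rho>m \<and> \<rho>p \<le> \<rho> * \<theta>p / psi a b T \<rho> z" if below: "psi a b T \<rho> z < \<theta>m"
  proof
    show "\<rho> < \<rho>m" using psi_le[OF assms(7), of \<rho> z] below assms(9) by force
    have "\<rho> \<le> \<rho>p" using psi_le[OF assms(8), of \<rho> z] below assms(6,10) by force
    then have "psi a b T \<rho> z / \<rho> \<le> \<theta>p / \<rho>p"
      using psi_div_le[OF assms(11), of \<rho>p b z] assms(10) by simp
    then show "\<rho>p \<le> \<rho> * \<theta>p / psi a b T \<rho> z" using pos assms(8,11) by (simp add: field_simps)
  qed
  moreover have "\<rho> * \<theta>m / psi a b T \<rho> z \<le> \<rho>m \<and> \<rho>p < \<rho>" if above: "psi a b T \<rho> z > \<theta>p"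
  proof
    show "\<rho>p < \<rho>" using psi_le[OF assms(11), of \<rho>p z] above assms(10) by force
    have "\<rho>m \<le> \<rho>" using psi_le[OF assms(11), of \<rho>m z] above assms(6,9) by force
    then have "\<theta>m / \<rho>m \<le> psi a b T \<rho> z / \<rho>"
      using psi_div_le[OF assms(7), of \<rho> b z] assms(9) by simp
    then show "\<rho> * \<theta>m / psi a b T \<rho> z \<le> \<rho>m" using pos assms(7,11) by (simp add: field_simps)
  qed
  ultimately show ?thesis by blast
qed

end
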